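(* Let $\xi(s)=\pi^{-s/2}\Gamma(s/2)\zeta(s)$, $\chi(s)=s(s-1)\xi(s)$, $A=\pi/3-1$, and \[ \begin{aligned} Z_1(s) & = (s-1)\chi(2s) \Bigl[(s-1)(3s-2)(As-A+1)\chi(s+1)\chi(3s) - (s+1)(s-2)\chi(s)\chi(3s-1) - 2(s-1)(s-2)\chi(s)\chi(3s) \Bigr] \\ & \quad - s \, \chi(2s-1) \Bigl[ s(3s-1)(As-1)\chi(s-1)\chi(3s-2) + (s+1)(s-2)\chi(s)\chi(3s-1) + 2s(s+1)\chi(s)\chi(3s-2) \Bigr]. \end{aligned} \] Then $Z_1(s)$ has no zero in the half-plane $\mathrm{Re}(s)\geq 20$. *)

theory Defs
  imports "HOL-Analysis.Analysis"
begin

text \<open>This agrees with the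
Riemann zeta function on the half-plane Re s > 1, which contains every point at
which it is evaluated in the statement (all arguments have real part at least 19).\<close>
definition zeta :: "complex \<Rightarrow> complex" where
  "zeta s = (\<Sum>n. 1 / (of_nat (Suc n)) powr s)"

definition xi :: "complex \<Rightarrow> complex" where
  "xi s = (of_real pi) powr (- s / 2) * Gamma (s / 2) * zeta s"

definition chi :: "complex \<Rightarrow> complex" where
  "chi s = s * (s - 1) * xi s"

definition A_const :: complex where
  "A_const = of_real (pi / 3 - 1)"

definition Z1 :: "complex \<Rightarrow> complex" where
  "Z1 s =
     (s - 1) * chi (2 * s) *
       ((s - 1) * (3 * s - 2) * (A_const * s - A_const + 1) * chi (s + 1) * chi (3 * s)
        - (s + 1) * (s - 2) * chi s * chi (3 * s - 1)
        - 2 * (s - 1) * (s - 2) * chi s * chi (3 * s))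
   - s * chi (2 * s - 1) *
       (s * (3 * s - 1) * (A_const * s - 1) * chi (s - 1) * chi (3 * s - 2)
        + (s + 1) * (s - 2) * chi s * chi (3 * s - 1)
        + 2 * s * (s + 1) * chi s * chi (3 * s - 2))"

end

theory Submission
  imports Defs
begin

text \<open>
  For \<open>Re s \<ge> 20\<close> the first term \<open>(s-1)\<^sup>2 (3s-2) (As-A+1) \<chi>(2s) \<chi>(s+1) \<chi>(3s)\<close> of \<open>Z1 s\<close>
  dominates the other five. Divided by it, each of them becomes a product of rational functions
  of \<open>s\<close> of modulus at most \<open>1\<close> or \<open>1/3\<close> and of ratios
  \<open>\<xi>(w-1)/\<xi>(w) = \<surd>\<pi> \<Gamma>((w-1)/2)/\<Gamma>(w/2) \<zeta>(w-1)/\<zeta>(w)\<close> with \<open>Re w \<ge> 20\<close>.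
  Comparing the Euler products of \<open>\<Gamma>\<close> at \<open>z\<close> and at \<open>Re z\<close>, and then using the
  log-convexity of \<open>\<Gamma>\<close> on the real axis, gives \<open>|\<Gamma>(z)/\<Gamma>(z+1/2)|\<^sup>2 \<le> (Re z + 1/2)/(Re z)\<^sup>2\<close>;
  together with \<open>|\<zeta>(w) - 1| \<le> 2 powr (2 - Re w)\<close> this bounds every \<open>\<xi>\<close>-ratio by \<open>3/5\<close>,
  and the five quotients then add up to less than \<open>0.76\<close>.
\<close>

lemma norm_mult_le_mult:
  fixes x y :: "'a :: real_normed_algebra"
  assumes "norm x \<le> a" "norm y \<le> b"
  shows "norm (x * y) \<le> a * b"
proof -
  have "norm x * norm y \<le> a * b"
    using assms by (intro mult_mono) (auto intro: order_trans[OF norm_ge_zero])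
  then show ?thesis
    using norm_mult_ineq[of x y] by linarith
qed

lemma norm_divide_le_of_Re_Im:
  fixes a b :: complex
  assumes "\<bar>Re a\<bar> \<le> c * \<bar>Re b\<bar>" "\<bar>Im a\<bar> \<le> c * \<bar>Im b\<bar>" "c \<ge> 0"
  shows "cmod (a / b) \<le> c"
proof (cases "b = 0")
  case True
  then show ?thesis
    using assms(3) by simp
next
  case False
  have "\<bar>Re a\<bar> \<le> \<bar>c * Re b\<bar>" "\<bar>Im a\<bar> \<le> \<bar>c * Im b\<bar>"
    using assms by (simp_all add: abs_mult)
  then have "(Re a)\<^sup>2 + (Im a)\<^sup>2 \<le> (c * Re b)\<^sup>2 + (c * Im b)\<^sup>2"
    by (intro add_mono) (simp_all only: abs_le_square_iff)
  then have "(cmod a)\<^sup>2 \<le> (c * cmod b)\<^sup>2"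
    by (simp add: cmod_power2 power_mult_distrib distrib_left)
  then have "cmod a \<le> c * cmod b"
    using assms(3) by (auto intro: power2_le_imp_le)
  then show ?thesis
    using False by (simp add: norm_divide divide_le_eq)
qed

lemma Re_mult_norm_add_real_le:
  fixes w :: complex and a :: real
  assumes "Re w > 0" "a \<ge> 0"
  shows "Re w * cmod (w + of_real a) \<le> cmod w * (Re w + a)"
proof (rule power2_le_imp_le)
  have "(Re w * cmod (w + of_real a))\<^sup>2 = (Re w)\<^sup>2 * (Re w + a)\<^sup>2 + (Re w)\<^sup>2 * (Im w)\<^sup>2"
    unfolding power_mult_distrib cmod_power2 by (simp add: algebra_simps)
  also have "\<dots> \<le> (Re w)\<^sup>2 * (Re w + a)\<^sup>2 + (Re w + a)\<^sup>2 * (Im w)\<^sup>2"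
    using assms by (intro add_left_mono mult_right_mono power_mono) auto
  also have "\<dots> = (cmod w * (Re w + a))\<^sup>2"
    unfolding power_mult_distrib cmod_power2 by (simp add: algebra_simps)
  finally show "(Re w * cmod (w + of_real a))\<^sup>2 \<le> (cmod w * (Re w + a))\<^sup>2" .
  show "0 \<le> cmod w * (Re w + a)"
    using assms by simp
qed

lemma norm_pochhammer_add_real_le:
  fixes z :: complex and a :: real
  assumes "Re z > 0" "a \<ge> 0"
  shows "cmod (pochhammer (z + of_real a) m) * pochhammer (Re z) m
       \<le> cmod (pochhammer z m) * pochhammer (Re z + a) m"
proof -
  have "cmod (pochhammer (z + of_real a) m) * pochhammer (Re z) m
      = (\<Prod>k\<in>{0..<m}. Re (z + of_nat k) * cmod (z + of_nat k + of_real a))"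
    by (simp add: pochhammer_prod prod_norm[symmetric] prod.distrib[symmetric] ac_simps)
  also have "\<dots> \<le> (\<Prod>k\<in>{0..<m}. cmod (z + of_nat k) * (Re (z + of_nat k) + a))"
    using assms by (intro prod_mono conjI Re_mult_norm_add_real_le) auto
  also have "\<dots> = cmod (pochhammer z m) * pochhammer (Re z + a) m"
    by (simp add: pochhammer_prod prod_norm[symmetric] prod.distrib[symmetric] ac_simps)
  finally show ?thesis .
qed

lemma norm_Gamma_series_ratio_le:
  fixes z :: complex and a :: real
  assumes "Re z > 0" "a \<ge> 0"
  shows "cmod (Gamma_series z n / Gamma_series (z + of_real a) n)
       \<le> Gamma_series (Re z) n / Gamma_series (Re z + a) n"
proof -
  define e where "e = exp (Re z * ln (real n)) / exp ((Re z + a) * ln (real n))"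
  have poch_pos: "cmod (pochhammer z (n+1)) > 0" "pochhammer (Re z) (n+1) > 0"
    using assms by (auto simp: pochhammer_eq_0_iff pochhammer_pos)
  have "cmod (Gamma_series z n / Gamma_series (z + of_real a) n)
      = e * (cmod (pochhammer (z + of_real a) (n+1)) / cmod (pochhammer z (n+1)))"
    unfolding e_def Gamma_series_def by (simp add: norm_divide norm_mult)
  also have "\<dots> \<le> e * (pochhammer (Re z + a) (n+1) / pochhammer (Re z) (n+1))"
    using norm_pochhammer_add_real_le[OF assms, of "n+1"] poch_pos
    by (intro mult_left_mono) (auto simp: e_def divide_simps mult_ac)
  also have "\<dots> = Gamma_series (Re z) n / Gamma_series (Re z + a) n"
    unfolding e_def Gamma_series_def by simp
  finally show ?thesis .
qed

lemma Gamma_nonzero_of_Re_pos: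
  fixes z :: complex
  assumes "Re z > 0"
  shows "Gamma z \<noteq> 0"
  using assms by (auto simp: Gamma_eq_zero_iff elim!: nonpos_Ints_cases)

lemma norm_Gamma_ratio_le:
  fixes z :: complex and a :: real
  assumes "Re z > 0" "a \<ge> 0"
  shows "cmod (Gamma z / Gamma (z + of_real a)) \<le> Gamma (Re z) / Gamma (Re z + a)"
proof (rule LIMSEQ_le)
  have "Gamma (Re z + a) > 0"
    using assms by (intro Gamma_real_pos) simp
  moreover have "Gamma (z + of_real a) \<noteq> 0"
    using assms by (intro Gamma_nonzero_of_Re_pos) simp
  ultimately
  show "(\<lambda>n. cmod (Gamma_series z n / Gamma_series (z + of_real a) n))
      \<longlonglongrightarrow> cmod (Gamma z / Gamma (z + of_real a))"
    and "(\<lambda>n. Gamma_series (Re z) n / Gamma_series (Re z + a) n)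
      \<longlonglongrightarrow> Gamma (Re z) / Gamma (Re z + a)"
    by (auto intro!: tendsto_norm tendsto_divide Gamma_series_LIMSEQ)
  show "\<exists>N. \<forall>n\<ge>N. cmod (Gamma_series z n / Gamma_series (z + of_real a) n)
      \<le> Gamma_series (Re z) n / Gamma_series (Re z + a) n"
    using norm_Gamma_series_ratio_le[OF assms] by blast
qed

lemma Gamma_half_shift_ratio_sq_le:
  fixes x :: real
  assumes "x > 0"
  shows "(Gamma x / Gamma (x + 1/2))\<^sup>2 \<le> (x + 1/2) / x\<^sup>2"
proof -
  have pos: "Gamma (x + 1/2) > 0" "Gamma (x + 1) > 0" "Gamma (x + 3/2) > 0"
    using assms by auto
  have "(1 - 1/2) *\<^sub>R (x + 1/2) + (1/2) *\<^sub>R (x + 3/2) = x + 1"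
    by (simp add: field_simps)
  then have "ln (Gamma (x + 1)) \<le> (1 - 1/2) * ln (Gamma (x + 1/2)) + (1/2) * ln (Gamma (x + 3/2))"
    using convex_onD[OF log_convex_Gamma_real, of "1/2" "x + 1/2" "x + 3/2"] assms by simp
  then have "ln (Gamma (x + 1) ^ 2) \<le> ln (Gamma (x + 1/2) * Gamma (x + 3/2))"
    using pos by (simp add: ln_mult ln_realpow)
  then have "Gamma (x + 1) ^ 2 \<le> Gamma (x + 1/2) * Gamma (x + 3/2)"
    using pos by simp
  moreover have "Gamma (x + 1) = x * Gamma x" "Gamma (x + 3/2) = (x + 1/2) * Gamma (x + 1/2)"
    using Gamma_plus1[of x] Gamma_plus1[of "x + 1/2"] assms
    by (auto simp: nonpos_Ints_def add_ac)
  ultimately have "x\<^sup>2 * Gamma x ^ 2 \<le> (x + 1/2) * Gamma (x + 1/2) ^ 2"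
    by (simp add: power2_eq_square mult_ac)
  then show ?thesis
    using assms pos by (simp add: divide_simps mult_ac)
qed

lemma norm_zeta_minus_one_le:
  fixes w :: complex
  assumes "Re w \<ge> 2"
  shows "cmod (zeta w - 1) \<le> 2 powr (2 - Re w)"
proof -
  define f where "f = (\<lambda>n. 1 / of_nat (Suc n) powr w)"
  define g where "g = (\<lambda>n. 2 powr (2 - Re w) * (1 / real (Suc n) - 1 / real (Suc (Suc n))))"
  have g_sums: "g sums (2 powr (2 - Re w))"
    using sums_mult[OF telescope_sums'[OF LIMSEQ_inverse_real_of_nat], of "2 powr (2 - Re w)"]
    by (simp add: g_def inverse_eq_divide)
  have f_le_g: "cmod (f (Suc n)) \<le> g n" for n
  proof -
    define m where "m = real (Suc (Suc n))"
    have m: "m \<ge> 2"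
      unfolding m_def by simp
    have "cmod (f (Suc n)) = 1 / m powr Re w"
      by (simp add: f_def m_def norm_divide norm_powr_real_powr)
    also have "\<dots> = 1 / (m powr 2 * m powr (Re w - 2))"
      by (simp flip: powr_add)
    also have "\<dots> \<le> 1 / (m * (m - 1) * 2 powr (Re w - 2))"
      using m assms by (intro divide_left_mono mult_mono powr_mono2) (auto simp: power2_eq_square)
    also have "\<dots> = g n"
    proof -
      have inv: "2 powr (2 - Re w) = 1 / 2 powr (Re w - 2)"
        by (simp flip: powr_minus_divide)
      show ?thesis
        unfolding g_def m_def inv by (simp add: field_simps)
    qed
    finally show ?thesis .
  qed
  have "summable f"
    using summable_comparison_test'[OF sums_summable[OF g_sums] f_le_g]
    by (simp add: summable_Suc_iff)
  moreover have "zeta w = suminf f" "f 0 = 1"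
    by (simp_all add: zeta_def f_def)
  ultimately have "zeta w - 1 = (\<Sum>n. f (Suc n))"
    by (simp add: suminf_split_head)
  also have "cmod \<dots> \<le> 2 powr (2 - Re w)"
    using norm_suminf_le[OF f_le_g sums_summable[OF g_sums]] g_sums by (simp add: sums_iff)
  finally show ?thesis .
qed

lemma zeta_nonzero:
  fixes w :: complex
  assumes "Re w > 2"
  shows "zeta w \<noteq> 0"
proof
  assume "zeta w = 0"
  then have "1 \<le> 2 powr (2 - Re w)"
    using norm_zeta_minus_one_le[of w] assms by simp
  moreover have "2 powr (2 - Re w) < 2 powr 0"
    using assms by (intro powr_less_mono) auto
  ultimately show False
    by simp
qed

lemma xi_nonzero:
  fixes w :: complex
  assumes "Re w > 2"
  shows "xi w \<noteq> 0"
  using assms zeta_nonzero[of w] Gamma_nonzero_of_Re_pos[of "w / 2"] by (simp add: xi_def)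

lemma chi_nonzero:
  fixes w :: complex
  assumes "Re w > 2"
  shows "chi w \<noteq> 0"
  using assms xi_nonzero[of w] by (auto simp: chi_def)

definition xi_ratio :: "complex \<Rightarrow> complex" where
  "xi_ratio w = xi (w - 1) / xi w"

lemma xi_ratio_eq:
  "xi_ratio w = of_real (sqrt pi) * (Gamma ((w - 1) / 2) / Gamma ((w - 1) / 2 + 1/2))
                * (zeta (w - 1) / zeta w)"
proof -
  have "(of_real pi :: complex) powr (1/2) = of_real (sqrt pi)"
    using powr_of_real[of pi "1/2"] by (simp add: powr_half_sqrt)
  moreover have "- (w - 1) / 2 = - w / 2 + 1/2"
    by (simp add: field_simps)
  ultimately have pi_powr: "(of_real pi :: complex) powr (- (w - 1) / 2)
      = of_real pi powr (- w / 2) * of_real (sqrt pi)"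
    by (simp only: powr_add)
  have half: "(w - 1) / 2 + 1/2 = w / 2"
    by (simp add: field_simps)
  show ?thesis
    unfolding xi_ratio_def xi_def pi_powr half by (simp add: mult_ac)
qed

lemma norm_Gamma_half_shift_ratio_le:
  fixes z :: complex
  assumes "Re z \<ge> 19/2"
  shows "cmod (Gamma z / Gamma (z + 1/2)) \<le> 1/3"
proof -
  have "(Gamma (Re z) / Gamma (Re z + 1/2))\<^sup>2 \<le> (Re z + 1/2) / (Re z)\<^sup>2"
    using assms by (intro Gamma_half_shift_ratio_sq_le) simp
  also have "\<dots> \<le> (1/3)\<^sup>2"
  proof -
    have "19/2 * Re z \<le> Re z * Re z"
      using assms by (intro mult_right_mono) auto
    then have "9 * Re z + 9/2 \<le> Re z * Re z"
      using assms by linarith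
    then show ?thesis
      using assms by (simp add: divide_le_eq power2_eq_square)
  qed
  finally have "Gamma (Re z) / Gamma (Re z + 1/2) \<le> 1/3"
    by (rule power2_le_imp_le) simp
  moreover have "cmod (Gamma z / Gamma (z + 1/2)) \<le> Gamma (Re z) / Gamma (Re z + 1/2)"
    using norm_Gamma_ratio_le[of z "1/2"] assms by simp
  ultimately show ?thesis
    by linarith
qed

lemma norm_zeta_shift_ratio_le:
  fixes w :: complex
  assumes "Re w \<ge> 20"
  shows "cmod (zeta (w - 1) / zeta w) \<le> 101/100"
proof -
  have "2 powr (2 - Re (w - 1)) \<le> 2 powr (-17)" "2 powr (2 - Re w) \<le> 2 powr (-17)"
    using assms by (intro powr_mono; simp)+
  then have "cmod (zeta (w - 1) - 1) \<le> 1 / 2^17" "cmod (zeta w - 1) \<le> 1 / 2^17"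
    using norm_zeta_minus_one_le[of "w - 1"] norm_zeta_minus_one_le[of w] assms
    by (simp_all add: powr_minus_divide)
  then have "cmod (zeta (w - 1)) \<le> 1 + 1 / 2^17" "cmod (zeta w) \<ge> 1 - 1 / 2^17"
    using norm_triangle_ineq2[of "zeta (w - 1)" 1] norm_triangle_ineq3[of "zeta w" 1]
    by (simp_all add: norm_minus_commute)
  then show ?thesis
    by (simp add: norm_divide divide_le_eq)
qed

lemma norm_xi_ratio_le:
  fixes w :: complex
  assumes "Re w \<ge> 20"
  shows "cmod (xi_ratio w) \<le> 3/5"
proof -
  have "sqrt pi \<le> sqrt ((89/50)\<^sup>2)"
    using pi_approx by (intro real_sqrt_le_mono) (simp add: power2_eq_square)
  then have "sqrt pi \<le> 89/50"
    by simp
  moreover have "cmod (Gamma ((w - 1) / 2) / Gamma ((w - 1) / 2 + 1/2)) \<le> 1/3"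
    using assms by (intro norm_Gamma_half_shift_ratio_le) simp
  moreover have "cmod (zeta (w - 1) / zeta w) \<le> 101/100"
    using assms by (rule norm_zeta_shift_ratio_le)
  ultimately have "cmod (xi_ratio w) \<le> 89/50 * (1/3) * (101/100)"
    unfolding xi_ratio_eq norm_mult by (intro mult_mono) auto
  then show ?thesis
    by simp
qed

lemma Re_A_const_affine_ge_1:
  assumes "Re s \<ge> 1"
  shows "Re (A_const * s - A_const + 1) \<ge> 1"
proof -
  have "Re (A_const * s - A_const + 1) = (pi / 3 - 1) * (Re s - 1) + 1"
    by (simp add: A_const_def field_simps)
  moreover have "(pi / 3 - 1) * (Re s - 1) \<ge> 0"
    using assms pi_gt3 by simp
  ultimately show ?thesis
    by simp
qed

text \<open>The five summands are the five remaining terms of \<open>Z1 s\<close>, in the order of its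
  definition, divided by its first term.\<close>

definition Z1_correction :: "complex \<Rightarrow> complex" where
  "Z1_correction s =
       (s - 2) / (3 * s) * (1 / (A_const * s - A_const + 1)) * xi_ratio (s + 1) * xi_ratio (3 * s)
     + 2 * ((s - 1) / (s + 1)) * ((s - 2) / (3 * s - 2)) * (1 / (A_const * s - A_const + 1))
         * xi_ratio (s + 1)
     + (s - 1) / (s + 1) * ((s - 2) / s) * ((A_const * s - 1) / (A_const * s - A_const + 1))
         * xi_ratio (2 * s) * xi_ratio s * xi_ratio (s + 1) * xi_ratio (3 * s - 1) * xi_ratio (3 * s)
     + (s - 2) / (3 * s) * (1 / (A_const * s - A_const + 1))
         * xi_ratio (2 * s) * xi_ratio (s + 1) * xi_ratio (3 * s)
     + 2 * ((s - 1) / (3 * s - 1)) * (1 / (A_const * s - A_const + 1))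
         * xi_ratio (2 * s) * xi_ratio (s + 1) * xi_ratio (3 * s - 1) * xi_ratio (3 * s)"

lemma chi_eq_xi_ratio_mult:
  assumes "Re s > 2"
  shows "chi (s + 1) = (s + 1) * s * xi (s + 1)"
    and "chi s = s * (s - 1) * xi_ratio (s + 1) * xi (s + 1)"
    and "chi (s - 1) = (s - 1) * (s - 2) * xi_ratio s * xi_ratio (s + 1) * xi (s + 1)"
    and "chi (2 * s) = 2 * s * (2 * s - 1) * xi (2 * s)"
    and "chi (2 * s - 1) = 2 * (2 * s - 1) * (s - 1) * xi_ratio (2 * s) * xi (2 * s)"
    and "chi (3 * s) = 3 * s * (3 * s - 1) * xi (3 * s)"
    and "chi (3 * s - 1) = (3 * s - 1) * (3 * s - 2) * xi_ratio (3 * s) * xi (3 * s)"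
    and "chi (3 * s - 2) = 3 * (3 * s - 2) * (s - 1) * xi_ratio (3 * s - 1) * xi_ratio (3 * s) * xi (3 * s)"
proof -
  have "xi (s + 1) \<noteq> 0" "xi s \<noteq> 0" "xi (2 * s) \<noteq> 0" "xi (3 * s) \<noteq> 0" "xi (3 * s - 1) \<noteq> 0"
    using assms by (intro xi_nonzero; simp)+
  then show "chi (s + 1) = (s + 1) * s * xi (s + 1)"
    and "chi s = s * (s - 1) * xi_ratio (s + 1) * xi (s + 1)"
    and "chi (s - 1) = (s - 1) * (s - 2) * xi_ratio s * xi_ratio (s + 1) * xi (s + 1)"
    and "chi (2 * s) = 2 * s * (2 * s - 1) * xi (2 * s)"
    and "chi (2 * s - 1) = 2 * (2 * s - 1) * (s - 1) * xi_ratio (2 * s) * xi (2 * s)"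
    and "chi (3 * s) = 3 * s * (3 * s - 1) * xi (3 * s)"
    and "chi (3 * s - 1) = (3 * s - 1) * (3 * s - 2) * xi_ratio (3 * s) * xi (3 * s)"
    and "chi (3 * s - 2) = 3 * (3 * s - 2) * (s - 1) * xi_ratio (3 * s - 1) * xi_ratio (3 * s) * xi (3 * s)"
    by (simp_all add: chi_def xi_ratio_def field_simps)
qed

lemma Z1_eq_leading_term_mult:
  assumes "Re s > 2"
  shows "Z1 s = (s - 1)\<^sup>2 * (3 * s - 2) * (A_const * s - A_const + 1)
                  * chi (2 * s) * chi (s + 1) * chi (3 * s) * (1 - Z1_correction s)"
proof -
  \<comment> \<open>Naming the linear factors stops \<open>field_simps\<close> from multiplying them out, so that
    each identity below is a cancellation of monomials.\<close>
  define L where "L = A_const * s - A_const + 1"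
  define M where "M = A_const * s - 1"
  define m1 where "m1 = s - 1"
  define m2 where "m2 = s - 2"
  define p1 where "p1 = s + 1"
  define d1 where "d1 = 2 * s - 1"
  define q1 where "q1 = 3 * s - 1"
  define q2 where "q2 = 3 * s - 2"
  define T0 where "T0 = m1\<^sup>2 * q2 * L * chi (2 * s) * chi (s + 1) * chi (3 * s)"
  define r1 where "r1 = m2 / (3 * s) * (1 / L) * xi_ratio (s + 1) * xi_ratio (3 * s)"
  define r2 where "r2 = 2 * (m1 / p1) * (m2 / q2) * (1 / L) * xi_ratio (s + 1)"
  define r3 where "r3 = m1 / p1 * (m2 / s) * (M / L)
    * xi_ratio (2 * s) * xi_ratio s * xi_ratio (s + 1) * xi_ratio (3 * s - 1) * xi_ratio (3 * s)"
  define r4 where "r4 = m2 / (3 * s) * (1 / L) * xi_ratio (2 * s) * xi_ratio (s + 1) * xi_ratio (3 * s)"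
  define r5 where "r5 = 2 * (m1 / q1) * (1 / L)
    * xi_ratio (2 * s) * xi_ratio (s + 1) * xi_ratio (3 * s - 1) * xi_ratio (3 * s)"
  note factor_defs = L_def M_def m1_def m2_def p1_def d1_def q1_def q2_def
  have "Re L \<ge> 1"
    using assms unfolding L_def by (intro Re_A_const_affine_ge_1) simp
  then have "L \<noteq> 0"
    by auto
  moreover have "s \<noteq> 0" "m1 \<noteq> 0" "p1 \<noteq> 0" "q1 \<noteq> 0" "q2 \<noteq> 0"
    using assms by (auto simp: factor_defs dest: arg_cong[where f = Re])
  ultimately have terms:
    "T0 * r1 = (s - 1) * chi (2 * s) * ((s + 1) * (s - 2) * chi s * chi (3 * s - 1))"
    "T0 * r2 = (s - 1) * chi (2 * s) * (2 * (s - 1) * (s - 2) * chi s * chi (3 * s))"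
    "T0 * r3 = s * chi (2 * s - 1)
                 * (s * (3 * s - 1) * (A_const * s - 1) * chi (s - 1) * chi (3 * s - 2))"
    "T0 * r4 = s * chi (2 * s - 1) * ((s + 1) * (s - 2) * chi s * chi (3 * s - 1))"
    "T0 * r5 = s * chi (2 * s - 1) * (2 * s * (s + 1) * chi s * chi (3 * s - 2))"
    unfolding T0_def r1_def r2_def r3_def r4_def r5_def chi_eq_xi_ratio_mult[OF assms]
    unfolding factor_defs[symmetric] by (simp_all add: field_simps power2_eq_square)
  have "Z1 s = T0 - T0 * r1 - T0 * r2 - T0 * r3 - T0 * r4 - T0 * r5"
    unfolding terms unfolding T0_def Z1_def factor_defs by (simp add: algebra_simps power2_eq_square)
  also have "\<dots> = T0 * (1 - (r1 + r2 + r3 + r4 + r5))"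
    by (simp add: algebra_simps)
  also have "r1 + r2 + r3 + r4 + r5 = Z1_correction s"
    unfolding Z1_correction_def r1_def r2_def r3_def r4_def r5_def factor_defs ..
  finally show ?thesis
    unfolding T0_def factor_defs .
qed

lemma norm_A_const_affine_ratio_le:
  assumes "Re s \<ge> 1"
  shows "cmod ((A_const * s - 1) / (A_const * s - A_const + 1)) \<le> 1"
proof (rule norm_divide_le_of_Re_Im)
  define B where "B = pi / 3 - 1"
  have B: "0 < B" "B < 2"
    using pi_gt3 pi_less_4 by (simp_all add: B_def)
  have "B \<le> B * Re s"
    using assms B mult_left_mono[of 1 "Re s" B] by simp
  then have "\<bar>B * Re s - 1\<bar> \<le> \<bar>B * Re s - B + 1\<bar>"
    using B by linarith
  then show "\<bar>Re (A_const * s - 1)\<bar> \<le> 1 * \<bar>Re (A_const * s - A_const + 1)\<bar>"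
    by (simp add: A_const_def B_def)
  show "\<bar>Im (A_const * s - 1)\<bar> \<le> 1 * \<bar>Im (A_const * s - A_const + 1)\<bar>"
    by (simp add: A_const_def)
qed simp

lemma norm_Z1_correction_lt_1:
  assumes "Re s \<ge> 20"
  shows "cmod (Z1_correction s) < 1"
proof -
  define L where "L = A_const * s - A_const + 1"
  have "Re L \<ge> 1"
    using assms unfolding L_def by (intro Re_A_const_affine_ge_1) simp
  then have factors:
    "cmod ((s - 2) / (3 * s)) \<le> 1/3" "cmod ((s - 1) / (s + 1)) \<le> 1"
    "cmod ((s - 2) / (3 * s - 2)) \<le> 1/3" "cmod ((s - 2) / s) \<le> 1"
    "cmod ((s - 1) / (3 * s - 1)) \<le> 1/3" "cmod (1 / L) \<le> 1"
    using assms by (intro norm_divide_le_of_Re_Im; simp)+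
  have "cmod ((A_const * s - 1) / L) \<le> 1"
    using assms unfolding L_def by (intro norm_A_const_affine_ratio_le) simp
  have two: "cmod (2 :: complex) \<le> 2"
    by (simp add: norm_numeral)
  have ratios: "cmod (xi_ratio (s + 1)) \<le> 3/5" "cmod (xi_ratio (3 * s)) \<le> 3/5"
    "cmod (xi_ratio (2 * s)) \<le> 3/5" "cmod (xi_ratio s) \<le> 3/5" "cmod (xi_ratio (3 * s - 1)) \<le> 3/5"
    using assms by (intro norm_xi_ratio_le; simp)+
  let ?t1 = "(s - 2) / (3 * s) * (1 / L) * xi_ratio (s + 1) * xi_ratio (3 * s)"
  let ?t2 = "2 * ((s - 1) / (s + 1)) * ((s - 2) / (3 * s - 2)) * (1 / L) * xi_ratio (s + 1)"
  let ?t3 = "(s - 1) / (s + 1) * ((s - 2) / s) * ((A_const * s - 1) / L)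
    * xi_ratio (2 * s) * xi_ratio s * xi_ratio (s + 1) * xi_ratio (3 * s - 1) * xi_ratio (3 * s)"
  let ?t4 = "(s - 2) / (3 * s) * (1 / L) * xi_ratio (2 * s) * xi_ratio (s + 1) * xi_ratio (3 * s)"
  let ?t5 = "2 * ((s - 1) / (3 * s - 1)) * (1 / L)
    * xi_ratio (2 * s) * xi_ratio (s + 1) * xi_ratio (3 * s - 1) * xi_ratio (3 * s)"
  have "Z1_correction s = ?t1 + ?t2 + ?t3 + ?t4 + ?t5"
    by (simp only: Z1_correction_def L_def)
  then have "cmod (Z1_correction s) \<le> cmod ?t1 + cmod ?t2 + cmod ?t3 + cmod ?t4 + cmod ?t5"
    by (simp only:) (intro order_trans[OF norm_triangle_ineq] add_mono order_refl)
  moreover have "cmod ?t1 \<le> 1/3 * 1 * (3/5) * (3/5)"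
    "cmod ?t2 \<le> 2 * 1 * (1/3) * 1 * (3/5)"
    "cmod ?t3 \<le> 1 * 1 * 1 * (3/5) * (3/5) * (3/5) * (3/5) * (3/5)"
    "cmod ?t4 \<le> 1/3 * 1 * (3/5) * (3/5) * (3/5)"
    "cmod ?t5 \<le> 2 * (1/3) * 1 * (3/5) * (3/5) * (3/5) * (3/5)"
    by (intro norm_mult_le_mult factors ratios two \<open>cmod ((A_const * s - 1) / L) \<le> 1\<close>)+
  ultimately show ?thesis
    by linarith
qed

theorem proposition6p1:
  fixes s :: complex
  assumes "Re s \<ge> 20"
  shows "Z1 s \<noteq> 0"
proof -
  have "chi (2 * s) \<noteq> 0" "chi (s + 1) \<noteq> 0" "chi (3 * s) \<noteq> 0"
    using assms by (intro chi_nonzero; simp)+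
  moreover have "Re (A_const * s - A_const + 1) \<ge> 1"
    using assms by (intro Re_A_const_affine_ge_1) simp
  then have "A_const * s - A_const + 1 \<noteq> 0"
    by (metis not_one_le_zero zero_complex.sel(1))
  moreover have "s - 1 \<noteq> 0" "3 * s - 2 \<noteq> 0"
    using assms by (auto dest: arg_cong[where f = Re])
  moreover have "1 - Z1_correction s \<noteq> 0"
    using norm_Z1_correction_lt_1[OF assms] by auto
  ultimately show ?thesis
    using Z1_eq_leading_term_mult[of s] assms by simp
qed

end
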